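(* Let $p,q\geq1$ be integers and let $\gamma(s)=(x(s),y(s))$ be a smooth curve with $x,y>0$, parametrized by arc length, with $\dot x=\cos\alpha$, $\dot y=\sin\alpha$ for a smooth function $\alpha(s)$, satisfying $$3\dot\alpha+p\,\frac{\sin\alpha}{x}-q\,\frac{\cos\alpha}{y}=0.$$ Let $I=y^{q/3}\cos\alpha$ and $J=x^{p/3}\sin\alpha$. Then $I$ and $J$ are increasing along such solutions. *)

theory Defs
  imports "HOL-Analysis.Analysis"
begin

end

theory Submission
  imports Defs
begin

text \<open>Differentiating along the curve and eliminating \<open>\<alpha>'\<close> with the ODE gives
  \<open>I' = y\<^bsup>q/3\<^esup> p sin\<^sup>2\<alpha> / (3x)\<close> and \<open>J' = x\<^bsup>p/3\<^esup> q cos\<^sup>2\<alpha> / (3y)\<close>: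
  the terms in \<open>sin \<alpha> cos \<alpha>\<close> cancel, and what remains is manifestly nonnegative.\<close>

lemma mono_on_if_deriv_nonneg:
  fixes f f' :: "real \<Rightarrow> real"
  assumes "is_interval S"
    and "\<And>s. s \<in> S \<Longrightarrow> (f has_real_derivative f' s) (at s)"
    and "\<And>s. s \<in> S \<Longrightarrow> f' s \<ge> 0"
  shows "mono_on S f"
proof (rule mono_onI)
  fix a b assume ab: "a \<in> S" "b \<in> S" "a \<le> b"
  have between: "t \<in> S" if "a \<le> t" "t \<le> b" for t
    using assms(1) ab that unfolding is_interval_1 by blast
  show "f a \<le> f b"
  proof (rule deriv_nonneg_imp_mono[of a b f f'])
    fix t assume "t \<in> {a..b}"
    then have "t \<in> S" using between by simp
    then show "(f has_real_derivative f' t) (at t)" "f' t \<ge> 0"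
      by (fact assms(2), fact assms(3))
  qed fact
qed

lemma has_real_derivative_powr_mult:
  fixes u g :: "real \<Rightarrow> real"
  assumes "(u has_real_derivative u') (at s)" and "u s > 0"
    and "(g has_real_derivative g') (at s)"
  shows "((\<lambda>t. u t powr r * g t) has_real_derivative
           u s powr r * (r * u' / u s * g s + g')) (at s)"
proof -
  have "((\<lambda>t. u t powr r) has_real_derivative u s powr r * (0 * ln (u s) + u' * r / u s)) (at s)"
    using DERIV_powr[OF assms(1,2) DERIV_const] .
  from DERIV_mult[OF this assms(3)] show ?thesis
    by (simp add: algebra_simps)
qed

lemma cos_invariant_has_derivative:
  fixes x y \<alpha> :: "real \<Rightarrow> real" and p q :: real
  assumes "x s > 0" "y s > 0"
    and "(y has_real_derivative sin (\<alpha> s)) (at s)"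
    and "(\<alpha> has_real_derivative a') (at s)"
    and "3 * a' + p * sin (\<alpha> s) / x s - q * cos (\<alpha> s) / y s = 0"
  shows "((\<lambda>t. y t powr (q / 3) * cos (\<alpha> t)) has_real_derivative
           y s powr (q / 3) * (p * (sin (\<alpha> s))\<^sup>2 / (3 * x s))) (at s)"
proof -
  have a'_eq: "a' = (q * cos (\<alpha> s) / y s - p * sin (\<alpha> s) / x s) / 3"
    using assms(5) by simp
  have "((\<lambda>t. cos (\<alpha> t)) has_real_derivative - sin (\<alpha> s) * a') (at s)"
    using DERIV_fun_cos[OF assms(4)] by simp
  from has_real_derivative_powr_mult[OF assms(3,2) this]
  have deriv: "((\<lambda>t. y t powr (q / 3) * cos (\<alpha> t)) has_real_derivative y s powr (q / 3) *
          (q / 3 * sin (\<alpha> s) / y s * cos (\<alpha> s) + - sin (\<alpha> s) * a')) (at s)" .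
  have deriv_eq: "q / 3 * sin (\<alpha> s) / y s * cos (\<alpha> s) + - sin (\<alpha> s) * a'
      = p * (sin (\<alpha> s))\<^sup>2 / (3 * x s)"
    unfolding a'_eq using assms(1,2) by (simp add: field_simps power2_eq_square)
  show ?thesis
    using deriv unfolding deriv_eq .
qed

lemma sin_invariant_has_derivative:
  fixes x y \<alpha> :: "real \<Rightarrow> real" and p q :: real
  assumes "x s > 0" "y s > 0"
    and "(x has_real_derivative cos (\<alpha> s)) (at s)"
    and "(\<alpha> has_real_derivative a') (at s)"
    and "3 * a' + p * sin (\<alpha> s) / x s - q * cos (\<alpha> s) / y s = 0"
  shows "((\<lambda>t. x t powr (p / 3) * sin (\<alpha> t)) has_real_derivative
           x s powr (p / 3) * (q * (cos (\<alpha> s))\<^sup>2 / (3 * y s))) (at s)"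
proof -
  have a'_eq: "a' = (q * cos (\<alpha> s) / y s - p * sin (\<alpha> s) / x s) / 3"
    using assms(5) by simp
  have "((\<lambda>t. sin (\<alpha> t)) has_real_derivative cos (\<alpha> s) * a') (at s)"
    using DERIV_fun_sin[OF assms(4)] by simp
  from has_real_derivative_powr_mult[OF assms(3,1) this]
  have deriv: "((\<lambda>t. x t powr (p / 3) * sin (\<alpha> t)) has_real_derivative x s powr (p / 3) *
          (p / 3 * cos (\<alpha> s) / x s * sin (\<alpha> s) + cos (\<alpha> s) * a')) (at s)" .
  have deriv_eq: "p / 3 * cos (\<alpha> s) / x s * sin (\<alpha> s) + cos (\<alpha> s) * a'
      = q * (cos (\<alpha> s))\<^sup>2 / (3 * y s)"
    unfolding a'_eq using assms(1,2) by (simp add: field_simps power2_eq_square)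
  show ?thesis
    using deriv unfolding deriv_eq .
qed

theorem lemma4p3:
  fixes x y \<alpha> \<alpha>' :: "real \<Rightarrow> real" and S :: "real set" and p q :: nat
  assumes "p \<ge> 1" and "q \<ge> 1"
    and "open S" and "is_interval S"
    and "\<And>s. s \<in> S \<Longrightarrow> x s > 0 \<and> y s > 0"
    and "\<And>s. s \<in> S \<Longrightarrow> (x has_real_derivative cos (\<alpha> s)) (at s)"
    and "\<And>s. s \<in> S \<Longrightarrow> (y has_real_derivative sin (\<alpha> s)) (at s)"
    and "\<And>s. s \<in> S \<Longrightarrow> (\<alpha> has_real_derivative \<alpha>' s) (at s)"
    and "\<And>s. s \<in> S \<Longrightarrow>
           3 * \<alpha>' s + real p * sin (\<alpha> s) / x s - real q * cos (\<alpha> s) / y s = 0"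
  shows "mono_on S (\<lambda>s. y s powr (real q / 3) * cos (\<alpha> s))
       \<and> mono_on S (\<lambda>s. x s powr (real p / 3) * sin (\<alpha> s))"
proof
  show "mono_on S (\<lambda>s. y s powr (real q / 3) * cos (\<alpha> s))"
  proof (rule mono_on_if_deriv_nonneg[OF assms(4)])
    fix s assume "s \<in> S"
    with assms(5,7-9) show "((\<lambda>s. y s powr (real q / 3) * cos (\<alpha> s)) has_real_derivative
        y s powr (real q / 3) * (real p * (sin (\<alpha> s))\<^sup>2 / (3 * x s))) (at s)"
      by (intro cos_invariant_has_derivative) auto
    show "0 \<le> y s powr (real q / 3) * (real p * (sin (\<alpha> s))\<^sup>2 / (3 * x s))"
      using assms(5)[OF \<open>s \<in> S\<close>] by (auto intro!: mult_nonneg_nonneg divide_nonneg_pos)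
  qed
  show "mono_on S (\<lambda>s. x s powr (real p / 3) * sin (\<alpha> s))"
  proof (rule mono_on_if_deriv_nonneg[OF assms(4)])
    fix s assume "s \<in> S"
    with assms(5,6,8,9) show "((\<lambda>s. x s powr (real p / 3) * sin (\<alpha> s)) has_real_derivative
        x s powr (real p / 3) * (real q * (cos (\<alpha> s))\<^sup>2 / (3 * y s))) (at s)"
      by (intro sin_invariant_has_derivative) auto
    show "0 \<le> x s powr (real p / 3) * (real q * (cos (\<alpha> s))\<^sup>2 / (3 * y s))"
      using assms(5)[OF \<open>s \<in> S\<close>] by (auto intro!: mult_nonneg_nonneg divide_nonneg_pos)
  qed
qed

end
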